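(* Let $1\le p<\infty$ and let $Q$ be a finite set of points in the closed upper half-plane $\{y\ge0\}$ with pairwise distinct $x$-coordinates. For $t\in\mathbb{R}$ and $q\in Q$ write $d(t,q)=\|(t,0)-q\|_p$, and say that $q$ is the farthest point of $Q$ from $t$ if $d(t,q)>d(t,q')$ for all $q'\in Q\setminus\{q\}$. Then: (1) for each $q\in Q$, the set $\{t\in\mathbb{R}: q \text{ is the farthest point of } Q \text{ from } t\}$ is either empty or an interval (connected); and (2) if $t<t'$, $q$ is the farthest point of $Q$ from $t$, $q'$ is the farthest point of $Q$ from $t'$, and $q\neq q'$, then the $x$-coordinate of $q$ is strictly greater than the $x$-coordinate of $q'$. Consequently, the intervals into which the farthest-point Voronoi diagram of $Q$ partitions the $x$-axis, listed from left to right as $I_1,\dots,I_\sigma$, have associated farthest points whose $x$-coordinates are strictly decreasing.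
   Context: $\|\cdot\|_p$ denotes the $L_p$ norm on $\mathbb{R}^2$. *)

theory Defs
  imports "HOL-Analysis.Analysis"
begin

definition lp_dist :: "real \<Rightarrow> real \<times> real \<Rightarrow> real \<times> real \<Rightarrow> real" where
  "lp_dist p u v = (\<bar>fst u - fst v\<bar> powr p + \<bar>snd u - snd v\<bar> powr p) powr (1 / p)"

definition farthest :: "real \<Rightarrow> (real \<times> real) set \<Rightarrow> real \<Rightarrow> real \<times> real \<Rightarrow> bool" where
  "farthest p Q t q \<longleftrightarrow> q \<in> Q \<and>
     (\<forall>q' \<in> Q - {q}. lp_dist p (t, 0) q > lp_dist p (t, 0) q')"

end

theory Submission
  imports Defs
begin

(*
  For 1 \<le> p the function f(x) = |x|^p is convex on the real line, and
  for a convex function the increment f(x + h) - f(x) (h > 0) is nondecreasing in x.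
  Comparing the p-th powers of the L_p distances from (t,0) to two points q, q' with
  fst q < fst q', the heights |snd q|^p, |snd q'|^p are constants and the difference
    |t - fst q|^p - |t - fst q'|^p
  is such an increment of f (step fst q' - fst q, taken at t - fst q'), hence is
  nondecreasing in t: once the right point q' stops being farther than q, it stays so.
  Since p-th powers preserve the order of nonnegative reals, "farthest" can be read off
  the p-th powers, and both claims follow from this monotonicity:
  (1) the set of t where q beats every other point is convex (an interval), and
  (2) if q is farthest at t and q' \<noteq> q at some t' > t, then q lies to the right of q'.
*)

text \<open>The power function z \<mapsto> z^p (p \<ge> 1) is convex on [0,\<infinity>).  The library gives
  convexity on (0,\<infinity>); the boundary point 0 is handled by u^p \<le> u for 0 \<le> u \<le> 1.\<close>

lemma powr_le_self:
  fixes u p :: real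
  assumes "0 \<le> u" "u \<le> 1" "1 \<le> p"
  shows "u powr p \<le> u"
proof (cases "u = 0")
  case False
  then have "u powr p \<le> u powr 1"
    using assms by (intro powr_mono') auto
  then show ?thesis using False assms by simp
qed simp

lemma convex_on_nonneg_powr:
  fixes p :: real
  assumes p: "1 \<le> p"
  shows "convex_on {0..} (\<lambda>z::real. z powr p)"
proof (rule convex_onI)
  fix u x y :: real
  assume "0 < u" "u < 1" "x \<in> {0..}" "y \<in> {0..}"
  then have u: "0 \<le> u" "u \<le> 1" and xy: "0 \<le> x" "0 \<le> y" by auto
  have scale: "(c * z) powr p \<le> c * z powr p" if "0 \<le> c" "c \<le> 1" "0 \<le> z" for c z :: real
  proof -
    have "(c * z) powr p = c powr p * z powr p" using that by (simp add: powr_mult)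
    also have "\<dots> \<le> c * z powr p"
      using powr_le_self[OF that(1,2) p] by (intro mult_right_mono) auto
    finally show ?thesis .
  qed
  consider "x = 0" | "y = 0" | "0 < x" "0 < y" using xy by linarith
  then show "((1 - u) *\<^sub>R x + u *\<^sub>R y) powr p \<le> (1 - u) * x powr p + u * y powr p"
  proof cases
    case 1 then show ?thesis using scale[of u y] u xy p by simp
  next
    case 2 then show ?thesis using scale[of "1 - u" x] u xy p by simp
  next
    case 3 then show ?thesis using convex_onD[OF powr_convex[OF p] u, of x y] by simp
  qed
qed (simp add: convex_real_interval)

text \<open>For p \<ge> 1, x \<mapsto> |x|^p is convex on all of R: it is the convex nondecreasing
  function z \<mapsto> z^p on [0,\<infinity>) composed with the convex function abs.\<close>

lemma convex_on_abs_powr: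
  fixes p :: real
  assumes p: "1 \<le> p"
  shows "convex_on UNIV (\<lambda>x::real. \<bar>x\<bar> powr p)"
proof (rule convex_onI)
  fix u x y :: real
  assume "0 < u" "u < 1"
  then have u: "0 \<le> u" "u \<le> 1" by auto
  have "\<bar>(1-u)*x + u*y\<bar> \<le> \<bar>(1-u)*x\<bar> + \<bar>u*y\<bar>" by (rule abs_triangle_ineq)
  also have "\<dots> = (1-u)*\<bar>x\<bar> + u*\<bar>y\<bar>" using u by (simp add: abs_mult)
  finally have "\<bar>(1-u)*x + u*y\<bar> powr p \<le> ((1-u)*\<bar>x\<bar> + u*\<bar>y\<bar>) powr p"
    using p by (intro powr_mono2) auto
  also have "\<dots> \<le> (1-u) * \<bar>x\<bar> powr p + u * \<bar>y\<bar> powr p"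
    using convex_onD[OF convex_on_nonneg_powr[OF p] u, of "\<bar>x\<bar>" "\<bar>y\<bar>"] by simp
  finally show "\<bar>(1 - u) *\<^sub>R x + u *\<^sub>R y\<bar> powr p \<le> (1 - u) * \<bar>x\<bar> powr p + u * \<bar>y\<bar> powr p"
    by simp
qed simp

text \<open>Indeed y and x + h are the two convex
  combinations of x and y + h with swapped weights.\<close>

lemma convex_increment_mono:
  fixes f :: "real \<Rightarrow> real"
  assumes f: "convex_on UNIV f" and "0 \<le> h" "x \<le> y"
  shows "f (x + h) - f x \<le> f (y + h) - f y"
proof (cases "x = y + h")
  case False
  then have gap: "x < y + h" using assms by linarith
  define u where "u = (y - x) / (y + h - x)"
  have u: "0 \<le> u" "u \<le> 1" using assms gap unfolding u_def by (auto simp: divide_simps)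
  have "u * (y + h - x) = y - x" using gap unfolding u_def by simp
  then have y_comb: "y = (1 - u) * x + u * (y + h)"
    and xh_comb: "x + h = (1 - (1 - u)) * x + (1 - u) * (y + h)"
    by (simp_all add: algebra_simps)
  have "f y \<le> (1 - u) * f x + u * f (y + h)"
    using convex_onD[OF f u, of x "y + h"] y_comb by simp
  moreover have "f (x + h) \<le> (1 - (1 - u)) * f x + (1 - u) * f (y + h)"
    using convex_onD[OF f, of "1 - u" x "y + h"] xh_comb u by simp
  ultimately show ?thesis by (simp add: algebra_simps)
qed (use assms in simp)

text \<open>The p-th power of the L_p distance from the axis point (t,0) to q.  It avoids the
  outer root and, as a function of t, is a translate of |x|^p plus a constant.\<close>

definition lp_pow_dist :: "real \<Rightarrow> real \<Rightarrow> real \<times> real \<Rightarrow> real" where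
  "lp_pow_dist p t q = \<bar>t - fst q\<bar> powr p + \<bar>snd q\<bar> powr p"

text \<open>Taking the p-th root is strictly monotone on [0,\<infinity>), so comparing L_p distances
  from (t,0) is the same as comparing their p-th powers.\<close>

lemma lp_dist_axis_less_iff:
  assumes "1 \<le> p"
  shows "lp_dist p (t, 0) q' < lp_dist p (t, 0) q \<longleftrightarrow> lp_pow_dist p t q' < lp_pow_dist p t q"
proof -
  have root: "lp_dist p (t, 0) r = lp_pow_dist p t r powr (1/p)" for r
    unfolding lp_dist_def lp_pow_dist_def by simp
  have nonneg: "0 \<le> lp_pow_dist p t r" for r
    unfolding lp_pow_dist_def by simp
  have "0 < 1/p" using assms by simp
  with nonneg show ?thesis unfolding root
    by (metis powr_less_mono2 powr_mono2 less_le not_le)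
qed

lemma farthest_iff_pow_dist:
  assumes "1 \<le> p"
  shows "farthest p Q t q \<longleftrightarrow> q \<in> Q \<and> (\<forall>q' \<in> Q - {q}. lp_pow_dist p t q' < lp_pow_dist p t q)"
  unfolding farthest_def using lp_dist_axis_less_iff[OF assms] by simp

text \<open>This is
  the increment inequality for |x|^p with step fst q' - fst q; the heights cancel.\<close>

lemma lp_pow_dist_advantage_mono:
  assumes p: "1 \<le> p" and left: "fst q < fst q'" and "s \<le> s'"
  shows "lp_pow_dist p s q - lp_pow_dist p s q' \<le> lp_pow_dist p s' q - lp_pow_dist p s' q'"
proof -
  have "\<bar>(s - fst q') + (fst q' - fst q)\<bar> powr p - \<bar>s - fst q'\<bar> powr p
      \<le> \<bar>(s' - fst q') + (fst q' - fst q)\<bar> powr p - \<bar>s' - fst q'\<bar> powr p"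
    using assms by (intro convex_increment_mono[OF convex_on_abs_powr[OF p]]) auto
  then show ?thesis unfolding lp_pow_dist_def by simp
qed

text \<open>For a competitor q' to the right of q use the left endpoint, for one to the left use the
  right endpoint, and propagate the strict advantage of q by monotonicity.\<close>

lemma farthest_region_is_interval:
  assumes p: "1 \<le> p" and distinct_x: "inj_on fst Q"
  shows "is_interval {t. farthest p Q t q}"
  unfolding is_interval_1
proof (intro ballI allI impI)
  fix a b x
  assume a: "a \<in> {t. farthest p Q t q}" and b: "b \<in> {t. farthest p Q t q}"
    and x: "a \<le> x \<and> x \<le> b"
  then have qQ: "q \<in> Q" by (simp add: farthest_def)
  have "lp_pow_dist p x q' < lp_pow_dist p x q" if q': "q' \<in> Q - {q}" for q'
  proof -
    have at_a: "lp_pow_dist p a q' < lp_pow_dist p a q"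
      and at_b: "lp_pow_dist p b q' < lp_pow_dist p b q"
      using a b q' farthest_iff_pow_dist[OF p] by auto
    have "fst q \<noteq> fst q'" using distinct_x qQ q' by (auto dest: inj_onD)
    then consider "fst q < fst q'" | "fst q' < fst q" by linarith
    then show ?thesis
    proof cases
      case 1
      with lp_pow_dist_advantage_mono[OF p 1, of a x] x at_a show ?thesis by linarith
    next
      case 2
      with lp_pow_dist_advantage_mono[OF p 2, of x b] x at_b show ?thesis by linarith
    qed
  qed
  with qQ show "x \<in> {t. farthest p Q t q}" by (simp add: farthest_iff_pow_dist[OF p])
qed

text \<open>Claim (2): farthest points appear from right to left as t increases.  If q were left
  of q', then q' losing to q at t would force q' to lose to q at every t' > t.\<close>

lemma farthest_order:
  assumes p: "1 \<le> p" and distinct_x: "inj_on fst Q"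
    and "t < t'" and far: "farthest p Q t q" and far': "farthest p Q t' q'" and "q \<noteq> q'"
  shows "fst q > fst q'"
proof (rule ccontr)
  assume "\<not> fst q > fst q'"
  moreover have qQ: "q \<in> Q" "q' \<in> Q" using far far' by (simp_all add: farthest_def)
  moreover have "fst q \<noteq> fst q'" using distinct_x qQ \<open>q \<noteq> q'\<close> by (auto dest: inj_onD)
  ultimately have left: "fst q < fst q'" by linarith
  have "lp_pow_dist p t q' < lp_pow_dist p t q" and "lp_pow_dist p t' q < lp_pow_dist p t' q'"
    using far far' qQ \<open>q \<noteq> q'\<close> farthest_iff_pow_dist[OF p] by auto
  with lp_pow_dist_advantage_mono[OF p left, of t t'] \<open>t < t'\<close> show False by linarith
qed

text \<open>Neither claim needs the points to lie in the upper half-plane.\<close>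

theorem lemma2:
  fixes p :: real and Q :: "(real \<times> real) set"
  assumes "1 \<le> p"
    and "finite Q"
    and "\<forall>q \<in> Q. snd q \<ge> 0"
    and "inj_on fst Q"
  shows "(\<forall>q \<in> Q. {t. farthest p Q t q} = {} \<or> is_interval {t. farthest p Q t q})
       \<and> (\<forall>t t' q q'. t < t' \<longrightarrow> farthest p Q t q \<longrightarrow> farthest p Q t' q' \<longrightarrow> q \<noteq> q'
             \<longrightarrow> fst q > fst q')"
  using farthest_region_is_interval[OF assms(1,4)] farthest_order[OF assms(1,4)] by blast

end
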